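(* Let $k\ge 2$ and $\ell\ge 2$ be integers. Then $\overline{\alpha}(\{1,k,2k,\dots,\ell k\})=\frac{1}{\ell+1}$.
   Context: For a finite set $S$ of positive integers, the distance graph $G(S)$ has vertex set $\mathbb{Z}$, with $i,j$ adjacent iff $|i-j|\in S$. The density of $A\subseteq\mathbb{Z}$ is $\delta(A)=\limsup_{N\to\infty}\frac{|A\cap[-N,N]|}{2N+1}$, and the independence ratio $\overline{\alpha}(S)$ is the supremum of $\delta(A)$ over independent sets $A$ of $G(S)$. *)

theory Defs
  imports "HOL-Analysis.Analysis"
begin

definition dist_adj :: "nat set \<Rightarrow> int \<Rightarrow> int \<Rightarrow> bool" where
  "dist_adj S i j \<longleftrightarrow> nat \<bar>i - j\<bar> \<in> S \<and> i \<noteq> j"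

definition indep_dist :: "nat set \<Rightarrow> int set \<Rightarrow> bool" where
  "indep_dist S A \<longleftrightarrow> (\<forall>i\<in>A. \<forall>j\<in>A. \<not> dist_adj S i j)"

definition upper_density :: "int set \<Rightarrow> ereal" where
  "upper_density A = limsup (\<lambda>N::nat. ereal (real (card (A \<inter> {- int N .. int N})) / real (2 * N + 1)))"

definition indep_ratio :: "nat set \<Rightarrow> ereal" where
  "indep_ratio S = (SUP A \<in> {A. indep_dist S A}. upper_density A)"

end

theory Submission
  imports Defs "HOL-Real_Asymp.Real_Asymp"
begin

text \<open>
  Upper bound: two points of an independent set that are congruent modulo k and lie in a window
  of length k(l+1) differ by jk with 1 \<le> j \<le> l, so every such window contains at most k of
  them, and the density is at most k / (k(l+1)) = 1/(l+1).
  Lower bound: writing x = qk + r with 0 \<le> r < k, take x iff q \<equiv> r mod 2 (mod l+1).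
  Steps jk change q by j \<not>\<equiv> 0 (mod l+1); a step 1 inside a block of length k flips the parity
  of r, and a step 1 across a block boundary would need q \<equiv> l (mod l+1) with q \<equiv> r mod 2 \<in> {0,1},
  which is impossible as l \<ge> 2. Each residue class modulo k meets exactly one of any l+1
  consecutive blocks, so every window of length k(l+1) contains exactly k points.
\<close>

lemma card_inter_window_sum:
  fixes A :: "int set"
  shows "card (A \<inter> {a..<a + int (m * p)}) =
         (\<Sum>i<m. card (A \<inter> {a + int (i * p)..<a + int (i * p) + int p}))"
proof (induction m)
  case 0
  show ?case by simp
next
  case (Suc m)
  have "{a..<a + int (Suc m * p)} = {a..<a + int (m * p)} \<union> {a + int (m * p)..<a + int (m * p) + int p}"
    by (simp add: ivl_disj_un_two(3) algebra_simps)
  then have "A \<inter> {a..<a + int (Suc m * p)} =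
      (A \<inter> {a..<a + int (m * p)}) \<union> (A \<inter> {a + int (m * p)..<a + int (m * p) + int p})"
    by blast
  then show ?case
    using Suc.IH by (simp add: card_Un_disjoint disjoint_iff)
qed

lemma upper_density_le_limit:
  assumes "\<And>N. real (card (A \<inter> {- int N..int N})) / real (2 * N + 1) \<le> f N"
    and "f \<longlonglongrightarrow> L"
  shows "upper_density A \<le> ereal L"
proof -
  have "upper_density A \<le> limsup (\<lambda>N. ereal (f N))"
    unfolding upper_density_def by (rule Limsup_mono) (use assms(1) in simp)
  also have "\<dots> = ereal L"
    using assms(2) by (intro lim_imp_Limsup) (simp_all add: lim_ereal)
  finally show ?thesis .
qed

lemma upper_density_ge_limit:
  assumes "\<And>N. f N \<le> real (card (A \<inter> {- int N..int N})) / real (2 * N + 1)"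
    and "f \<longlonglongrightarrow> L"
  shows "ereal L \<le> upper_density A"
proof -
  have "ereal L = limsup (\<lambda>N. ereal (f N))"
    using assms(2) by (intro lim_imp_Limsup[symmetric]) (simp_all add: lim_ereal)
  also have "\<dots> \<le> upper_density A"
    unfolding upper_density_def by (rule Limsup_mono) (use assms(1) in simp)
  finally show ?thesis .
qed

lemma upper_density_le_of_window_bound:
  fixes A :: "int set"
  assumes p: "p > 0" and window: "\<And>a. card (A \<inter> {a..<a + int p}) \<le> c"
  shows "upper_density A \<le> ereal (c / p)"
proof (rule upper_density_le_limit)
  fix N :: nat
  define n where "n = 2 * N + 1"
  define m where "m = n div p + 1"
  have "n < m * p"
    unfolding m_def using p by (simp add: dividend_less_div_times)
  then have "2 * int N + 1 < int (m * p)"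
    unfolding n_def by linarith
  then have "{- int N..int N} \<subseteq> {- int N..<- int N + int (m * p)}"
    by auto
  then have "card (A \<inter> {- int N..int N}) \<le> card (A \<inter> {- int N..<- int N + int (m * p)})"
    by (intro card_mono) auto
  also have "\<dots> \<le> m * c"
    unfolding card_inter_window_sum using sum_bounded_above[of "{..<m}", OF window] by simp
  finally have "real (card (A \<inter> {- int N..int N})) \<le> real m * c"
    by (simp flip: of_nat_mult)
  also have "real m \<le> n / p + 1"
    using of_nat_div_le_of_nat[of n p] unfolding m_def by simp
  finally have "real (card (A \<inter> {- int N..int N})) \<le> (n / p + 1) * c"
    by (simp add: mult_right_mono order_trans)
  then have "real (card (A \<inter> {- int N..int N})) / n \<le> (n / p + 1) * c / n"
    by (simp add: divide_right_mono)
  also have "\<dots> = c / p + c / n"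
    unfolding n_def by (simp add: field_simps)
  finally show "real (card (A \<inter> {- int N..int N})) / real (2 * N + 1) \<le> c / p + c / real (2 * N + 1)"
    unfolding n_def .
qed real_asymp

lemma upper_density_ge_of_window_bound:
  fixes A :: "int set"
  assumes p: "p > 0" and window: "\<And>a. c \<le> card (A \<inter> {a..<a + int p})"
  shows "ereal (c / p) \<le> upper_density A"
proof (rule upper_density_ge_limit)
  fix N :: nat
  define n where "n = 2 * N + 1"
  define m where "m = n div p"
  have "m * p \<le> n"
    unfolding m_def by simp
  then have "int (m * p) \<le> 2 * int N + 1"
    unfolding n_def by linarith
  then have window_sub: "{- int N..<- int N + int (m * p)} \<subseteq> {- int N..int N}"
    by auto
  have "m * c \<le> card (A \<inter> {- int N..<- int N + int (m * p)})"
    unfolding card_inter_window_sum using sum_bounded_below[of "{..<m}", OF window] by simp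
  also have "\<dots> \<le> card (A \<inter> {- int N..int N})"
    using window_sub by (intro card_mono) auto
  finally have count: "real m * c \<le> real (card (A \<inter> {- int N..int N}))"
    by (simp flip: of_nat_mult)
  have "n < (m + 1) * p"
    unfolding m_def using p by (simp add: dividend_less_div_times)
  then have "real n < (real m + 1) * p"
    by (metis of_nat_1 of_nat_add of_nat_less_iff of_nat_mult)
  then have "n / p - 1 \<le> real m"
    using p by (simp add: field_simps)
  then have "(n / p - 1) * c \<le> real (card (A \<inter> {- int N..int N}))"
    using count by (meson mult_right_mono of_nat_0_le_iff order_trans)
  then have "(n / p - 1) * c / n \<le> real (card (A \<inter> {- int N..int N})) / n"
    by (simp add: divide_right_mono)
  moreover have "(n / p - 1) * c / n = c / p - c / n"
    unfolding n_def by (simp add: field_simps)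
  ultimately show "c / p - c / real (2 * N + 1) \<le> real (card (A \<inter> {- int N..int N})) / real (2 * N + 1)"
    unfolding n_def by simp
qed real_asymp

lemma indep_dist_iff_shift:
  "indep_dist S A \<longleftrightarrow> (\<forall>x\<in>A. \<forall>d\<in>S. d \<noteq> 0 \<longrightarrow> x + int d \<notin> A)"
proof
  assume "indep_dist S A"
  then show "\<forall>x\<in>A. \<forall>d\<in>S. d \<noteq> 0 \<longrightarrow> x + int d \<notin> A"
    unfolding indep_dist_def dist_adj_def
    by (metis add_diff_cancel_left' abs_minus_commute nat_int of_nat_eq_0_iff abs_of_nat
        add_cancel_left_right)
next
  assume shift: "\<forall>x\<in>A. \<forall>d\<in>S. d \<noteq> 0 \<longrightarrow> x + int d \<notin> A"
  show "indep_dist S A"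
    unfolding indep_dist_def dist_adj_def
  proof (intro ballI notI)
    fix i j assume "i \<in> A" "j \<in> A" "nat \<bar>i - j\<bar> \<in> S \<and> i \<noteq> j"
    then show False
      using shift[rule_format, of "min i j" "nat \<bar>i - j\<bar>"]
      by (cases "i \<le> j") (auto simp: min_def)
  qed
qed

lemma indep_card_window_le:
  fixes A :: "int set" and k l :: nat
  assumes indep: "indep_dist S A" and k: "k > 0"
    and multiples: "{m * k | m. 1 \<le> m \<and> m \<le> l} \<subseteq> S"
  shows "card (A \<inter> {a..<a + int (k * (l + 1))}) \<le> k"
proof -
  let ?W = "A \<inter> {a..<a + int (k * (l + 1))}"
  have no_shift: "x + int (j * k) \<notin> A" if "x \<in> A" "1 \<le> j" "j \<le> l" for x j
  proof -
    have "j * k \<in> S" "j * k \<noteq> 0" using that multiples k by auto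
    then show ?thesis using indep \<open>x \<in> A\<close> unfolding indep_dist_iff_shift by blast
  qed
  have "inj_on (\<lambda>x. x mod int k) ?W"
  proof (rule linorder_inj_onI')
    fix x y assume x: "x \<in> ?W" and y: "y \<in> ?W" and "x < y"
    show "x mod int k \<noteq> y mod int k"
    proof
      assume "x mod int k = y mod int k"
      then obtain j where j: "y - x = int k * j"
        by (metis mod_eq_dvd_iff dvd_def)
      have "0 < int k * j" using \<open>x < y\<close> j by simp
      then have "0 < j" using k by (simp add: zero_less_mult_iff)
      moreover have "int k * j < int k * (int l + 1)" using x y j by (auto simp: algebra_simps)
      then have "j \<le> int l" using k by simp
      ultimately have "y = x + int (nat j * k)" "1 \<le> nat j" "nat j \<le> l"
        using j by (auto simp: algebra_simps)
      then show False using no_shift x y by blast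
    qed
  qed
  moreover have "(\<lambda>x. x mod int k) ` ?W \<subseteq> {0..<int k}"
    using k by auto
  ultimately have "card ?W \<le> card {0..<int k}"
    by (intro card_inj_on_le) auto
  then show ?thesis by simp
qed

definition parity_pattern :: "nat \<Rightarrow> nat \<Rightarrow> int set" where
  "parity_pattern k l = {x. (x div int k) mod (int l + 1) = x mod int k mod 2}"

lemma parity_pattern_shift_multiple:
  assumes "k > 0" and "x \<in> parity_pattern k l" and "1 \<le> j" "j \<le> l"
  shows "x + int (j * k) \<notin> parity_pattern k l"
proof
  assume "x + int (j * k) \<in> parity_pattern k l"
  moreover have "(x + int (j * k)) mod int k = x mod int k"
    "(x + int (j * k)) div int k = x div int k + int j"
    using assms(1) by simp_all
  ultimately have "(x div int k + int j) mod (int l + 1) = (x div int k) mod (int l + 1)"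
    using assms(2) unfolding parity_pattern_def by simp
  then have "(int l + 1) dvd int j"
    by (metis add_diff_cancel_left' mod_eq_dvd_iff)
  then show False
    using assms(3,4) by (auto dest: zdvd_imp_le)
qed

lemma parity_pattern_succ:
  assumes "k > 0" and "l \<ge> 2" and x: "x \<in> parity_pattern k l"
  shows "x + 1 \<notin> parity_pattern k l"
proof
  assume x1: "x + 1 \<in> parity_pattern k l"
  define q r where "q = x div int k" and "r = x mod int k"
  have x_eq: "x + 1 = (r + 1) + q * int k" and "0 \<le> r" "r < int k"
    using assms(1) unfolding q_def r_def by simp_all
  have q: "q mod (int l + 1) = r mod 2"
    using x unfolding parity_pattern_def q_def r_def by simp
  show False
  proof (cases "r + 1 < int k")
    case True
    then have "(x + 1) div int k = q" "(x + 1) mod int k = r + 1"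
      unfolding x_eq using \<open>0 \<le> r\<close> by simp_all
    then have "q mod (int l + 1) = (r + 1) mod 2"
      using x1 unfolding parity_pattern_def by simp
    with q have "r mod 2 = (r + 1) mod 2" by simp
    then show False by arith
  next
    case False
    then have "x + 1 = (q + 1) * int k"
      unfolding x_eq using \<open>r < int k\<close> by (simp add: algebra_simps)
    then have "(q + 1) mod (int l + 1) = 0"
      using x1 assms(1) unfolding parity_pattern_def by simp
    moreover have "(q + 1) mod (int l + 1) = (q mod (int l + 1) + 1) mod (int l + 1)"
      by (simp add: mod_add_left_eq)
    also have "\<dots> = q mod (int l + 1) + 1"
      unfolding q using assms(2) by (intro mod_pos_pos_trivial) auto
    ultimately show False
      using pos_mod_sign[of "int l + 1" q] by linarith
  qed
qed

lemma parity_pattern_indep: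
  assumes "k > 0" and "l \<ge> 2"
  shows "indep_dist ({1} \<union> {m * k | m. 1 \<le> m \<and> m \<le> l}) (parity_pattern k l)"
  unfolding indep_dist_iff_shift
  using parity_pattern_succ[OF assms] parity_pattern_shift_multiple[OF assms(1)] by auto

lemma parity_pattern_card_window_ge:
  assumes k: "k > 0" and l: "l \<ge> 1"
  shows "k \<le> card (parity_pattern k l \<inter> {a..<a + int (k * (l + 1))})"
proof -
  let ?W = "parity_pattern k l \<inter> {a..<a + int (k * (l + 1))}"
  define shift where "shift y = (y mod int k mod 2 - y div int k) mod (int l + 1)" for y
  define g where "g r = a + r + shift (a + r) * int k" for r
  have g_in: "g r \<in> ?W" if r: "r \<in> {0..<int k}" for r
  proof -
    define y where "y = a + r"
    have "0 \<le> shift y" "shift y \<le> int l"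
      unfolding shift_def using pos_mod_bound[of "int l + 1"] by (simp_all add: int_one_le_iff_zero_less)
    have "g r div int k = y div int k + shift y" "g r mod int k = y mod int k"
      using k unfolding g_def y_def by simp_all
    moreover have "(y div int k + shift y) mod (int l + 1) = y mod int k mod 2 mod (int l + 1)"
      unfolding shift_def by (simp add: mod_add_right_eq)
    moreover have "y mod int k mod 2 mod (int l + 1) = y mod int k mod 2"
      using l by (intro mod_pos_pos_trivial) auto
    ultimately have "g r \<in> parity_pattern k l"
      unfolding parity_pattern_def by simp
    moreover have "a \<le> g r \<and> g r < a + int (k * (l + 1))"
    proof -
      have "0 \<le> int k * shift y" "int k * shift y \<le> int k * int l"
        using \<open>0 \<le> shift y\<close> \<open>shift y \<le> int l\<close> by (simp_all add: mult_left_mono)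
      moreover have "g r = a + r + int k * shift y" "int (k * (l + 1)) = int k * int l + int k"
        unfolding g_def y_def by (simp_all add: algebra_simps)
      ultimately show ?thesis using r by (simp only: atLeastLessThan_iff) linarith
    qed
    ultimately show ?thesis by simp
  qed
  have g_offset: "(g r - a) mod int k = r" if "r \<in> {0..<int k}" for r
    using that unfolding g_def by simp
  have "inj_on g {0..<int k}"
    by (rule inj_on_inverseI[where g = "\<lambda>x. (x - a) mod int k"]) (rule g_offset)
  then have "card {0..<int k} \<le> card ?W"
    by (rule card_inj_on_le) (use g_in in auto)
  then show ?thesis by simp
qed

theorem corollary20:
  fixes k l :: nat
  assumes "k \<ge> 2" and "l \<ge> 2"
  shows "indep_ratio ({1} \<union> {m * k | m. 1 \<le> m \<and> m \<le> l}) = ereal (1 / (real l + 1))"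
proof -
  let ?S = "{1} \<union> {m * k | m. 1 \<le> m \<and> m \<le> l}"
  have k: "k > 0" and p: "k * (l + 1) > 0"
    using assms(1) by simp_all
  have ratio: "real k / real (k * (l + 1)) = 1 / (real l + 1)"
  proof -
    have "real (k * (l + 1)) = real k * (real l + 1)" by (simp add: algebra_simps)
    then show ?thesis using k by simp
  qed
  have "indep_ratio ?S \<le> ereal (1 / (real l + 1))"
    unfolding indep_ratio_def
  proof (rule SUP_least)
    fix A assume "A \<in> {A. indep_dist ?S A}"
    then have "card (A \<inter> {a..<a + int (k * (l + 1))}) \<le> k" for a
      using indep_card_window_le[OF _ k] by blast
    then show "upper_density A \<le> ereal (1 / (real l + 1))"
      using upper_density_le_of_window_bound[OF p] ratio by metis
  qed
  moreover have "ereal (1 / (real l + 1)) \<le> indep_ratio ?S"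
    unfolding indep_ratio_def
  proof (rule SUP_upper2)
    show "parity_pattern k l \<in> {A. indep_dist ?S A}"
      using parity_pattern_indep[OF k assms(2)] by simp
    show "ereal (1 / (real l + 1)) \<le> upper_density (parity_pattern k l)"
      using upper_density_ge_of_window_bound[OF p parity_pattern_card_window_ge[OF k]] assms(2) ratio
      by simp
  qed
  ultimately show ?thesis
    by (rule antisym)
qed

end
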